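(* Let $V$ be a non-degenerate symplectic space of dimension $n=2r$ over a field $\mathbb{F}$ with $|\mathbb{F}|\ge3$, with hyperbolic basis $\{e_i,f_i\}_{i=1}^r$, $G=\mathrm{Sp}(V)$, and let $B$ be the stabilizer in $G$ of the standard chamber $C=\{C_l\}_{l=1}^{n-1}$ of $\Gamma(V)$. Then $B\cong(\mathbb{F}\rtimes\mathrm{GL}_1(\mathbb{F}))^{r}$, where for $j=1,\dots,r$ the $j$-th factor is realized as the group $B_j$ acting on $\langle e_j,f_j\rangle$, with respect to the basis $(e_j,f_j)$, by the matrices $\begin{pmatrix}a_j&b_j\\0&a_j^{-1}\end{pmatrix}$, $a_j\in\mathbb{F}^*$, $b_j\in\mathbb{F}$ (and $B$ is the group of block-diagonal elements of $G$ with such blocks). Moreover, the kernel of the action of $G$ on $\Gamma(V)$ is $\{\pm1\}$.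
   Context: $\mathsf{s}(e_i,e_j)=\mathsf{s}(f_i,f_j)=0$, $\mathsf{s}(e_i,f_j)=\delta_{ij}$. Matrices act with the convention that the $k$-th column gives the coordinates of the image of the $k$-th basis vector. $\mathrm{Rad}(U)=U\cap U^\perp$. $\Gamma(V)$: for $i\in\{1,\dots,n-1\}$ the objects of type $i$ are the $i$-dimensional subspaces $U$ with $\dim\mathrm{Rad}(U)\le1$; $X,Y$ incident iff $X=Y$, or $X\subseteq Y$ with $X\cap\mathrm{Rad}(Y)=0$, or vice versa. With $h_{2i-1}=e_i$, $h_{2i}=f_i$, the standard chamber is $C_l=\langle h_1,\dots,h_l\rangle$. *)

theory Defs
  imports Complex_Main "HOL-Library.Function_Algebras"
begin

text \<open>Vectors of V = F^n, n = 2r, are functions nat => F supported on {0..<2r}.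
  0-indexed standard basis: index 2i is e_(i+1), index 2i+1 is f_(i+1)
  (so h_k of the paper is index k-1).\<close>

definition vscale :: "'a::field \<Rightarrow> (nat \<Rightarrow> 'a) \<Rightarrow> (nat \<Rightarrow> 'a)" where
  "vscale c v = (\<lambda>i. c * v i)"

lemma vector_space_vscale: "vector_space (vscale :: 'a::field \<Rightarrow> _)"
  by unfold_locales (auto simp: vscale_def fun_eq_iff algebra_simps)

definition Vsp :: "nat \<Rightarrow> (nat \<Rightarrow> 'a::field) set" where
  "Vsp r = {v. \<forall>i\<ge>2*r. v i = 0}"

definition symp :: "nat \<Rightarrow> (nat \<Rightarrow> 'a::field) \<Rightarrow> (nat \<Rightarrow> 'a) \<Rightarrow> 'a" where
  "symp r x y = (\<Sum>i<r. x (2*i) * y (2*i+1) - x (2*i+1) * y (2*i))"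

text \<open>Matrices: column k = coordinates of the image of the k-th basis vector.\<close>
definition mat_app :: "nat \<Rightarrow> (nat \<Rightarrow> nat \<Rightarrow> 'a::field) \<Rightarrow> (nat \<Rightarrow> 'a) \<Rightarrow> (nat \<Rightarrow> 'a)" where
  "mat_app r M v = (\<lambda>i. if i < 2*r then (\<Sum>j<2*r. M i j * v j) else 0)"

definition matmul :: "nat \<Rightarrow> (nat \<Rightarrow> nat \<Rightarrow> 'a::field) \<Rightarrow> (nat \<Rightarrow> nat \<Rightarrow> 'a) \<Rightarrow> (nat \<Rightarrow> nat \<Rightarrow> 'a)" where
  "matmul r M N = (\<lambda>i j. \<Sum>k<2*r. M i k * N k j)"

definition is_mat :: "nat \<Rightarrow> (nat \<Rightarrow> nat \<Rightarrow> 'a::field) \<Rightarrow> bool" where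
  "is_mat r M \<longleftrightarrow> (\<forall>i j. (2*r \<le> i \<or> 2*r \<le> j) \<longrightarrow> M i j = 0)"

definition idmat :: "nat \<Rightarrow> nat \<Rightarrow> nat \<Rightarrow> 'a::field" where
  "idmat r = (\<lambda>i j. if i = j \<and> i < 2*r then 1 else 0)"

definition Sp :: "nat \<Rightarrow> (nat \<Rightarrow> nat \<Rightarrow> 'a::field) set" where
  "Sp r = {M. is_mat r M \<and> bij_betw (mat_app r M) (Vsp r) (Vsp r) \<and>
              (\<forall>x\<in>Vsp r. \<forall>y\<in>Vsp r. symp r (mat_app r M x) (mat_app r M y) = symp r x y)}"

definition perp :: "nat \<Rightarrow> (nat \<Rightarrow> 'a::field) set \<Rightarrow> (nat \<Rightarrow> 'a) set" where
  "perp r U = {v \<in> Vsp r. \<forall>u\<in>U. symp r v u = 0}"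

definition Rad :: "nat \<Rightarrow> (nat \<Rightarrow> 'a::field) set \<Rightarrow> (nat \<Rightarrow> 'a) set" where
  "Rad r U = U \<inter> perp r U"

abbreviation vdim :: "(nat \<Rightarrow> 'a::field) set \<Rightarrow> nat" where
  "vdim \<equiv> vector_space.dim vscale"

abbreviation vspan :: "(nat \<Rightarrow> 'a::field) set \<Rightarrow> (nat \<Rightarrow> 'a) set" where
  "vspan \<equiv> module.span vscale"

definition Gamma_obj :: "nat \<Rightarrow> (nat \<Rightarrow> 'a::field) set set" where
  "Gamma_obj r = {U. module.subspace vscale U \<and> U \<subseteq> Vsp r \<and>
       1 \<le> vdim U \<and> vdim U \<le> 2*r - 1 \<and> vdim (Rad r U) \<le> 1}"

definition stdvec :: "nat \<Rightarrow> nat \<Rightarrow> 'a::field" where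
  "stdvec k = (\<lambda>i. if i = k then 1 else 0)"

definition Cham :: "nat \<Rightarrow> (nat \<Rightarrow> 'a::field) set" where
  "Cham l = vspan (stdvec ` {..<l})"

definition Borel :: "nat \<Rightarrow> (nat \<Rightarrow> nat \<Rightarrow> 'a::field) set" where
  "Borel r = {g \<in> Sp r. \<forall>l\<in>{1..2*r-1}. mat_app r g ` Cham l = Cham l}"

text \<open>Block-diagonal matrix whose j-th 2x2 block (basis e_j,f_j) is [[a j, b j],[0, (a j)^-1]].\<close>
definition blockmat :: "nat \<Rightarrow> (nat \<Rightarrow> 'a::field) \<Rightarrow> (nat \<Rightarrow> 'a) \<Rightarrow> nat \<Rightarrow> nat \<Rightarrow> 'a" where
  "blockmat r a b = (\<lambda>i j. if i < 2*r \<and> j < 2*r \<and> i div 2 = j div 2 then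
       (if even i \<and> even j then a (i div 2)
        else if even i \<and> odd j then b (i div 2)
        else if odd i \<and> odd j then inverse (a (i div 2))
        else 0) else 0)"

text \<open>Parameters of (F \<rtimes> GL_1(F))^r: pairs (a,b) with a j nonzero for j<r,
  normalized (a j = 1, b j = 0) for j >= r.\<close>
definition params :: "nat \<Rightarrow> ((nat \<Rightarrow> 'a::field) \<times> (nat \<Rightarrow> 'a)) set" where
  "params r = {(a,b). (\<forall>j<r. a j \<noteq> 0) \<and> (\<forall>j\<ge>r. a j = 1 \<and> b j = 0)}"

definition pmul :: "((nat \<Rightarrow> 'a::field) \<times> (nat \<Rightarrow> 'a)) \<Rightarrow> ((nat \<Rightarrow> 'a) \<times> (nat \<Rightarrow> 'a))
     \<Rightarrow> ((nat \<Rightarrow> 'a) \<times> (nat \<Rightarrow> 'a))" where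
  "pmul p q = ((\<lambda>j. fst p j * fst q j),
               (\<lambda>j. fst p j * snd q j + snd p j * inverse (fst q j)))"

end

theory Submission
  imports Defs
begin

(* An element g of the stabiliser B fixes every C_l, so its matrix is upper triangular.
   Being symplectic, g also fixes the orthogonal complement of C_2k, which is spanned by
   e_(k+1), f_(k+1), ..., e_r, f_r; this kills all entries to the right of the 2x2 diagonal
   blocks, and s(g e_k, g f_k) = 1 makes the two diagonal entries of each block mutually
   inverse. Conversely these block matrices are visibly symplectic and triangular.
   For the kernel: every line is an object of type 1, so g fixes every line and is therefore a
   scalar c, and c^2 = 1 because g preserves s. *)

interpretation V: vector_space "vscale :: 'a::field \<Rightarrow> _"
  by (rule vector_space_vscale)

definition vanish_from :: "nat \<Rightarrow> (nat \<Rightarrow> 'a::field) set" where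
  "vanish_from l = {v. \<forall>i\<ge>l. v i = 0}"

lemma sum_lessThan_double: "(\<Sum>j<2*(r::nat). f j) = (\<Sum>i<r. f (2*i) + f (2*i+1))"
  by (induction r) (auto simp: sum.distrib add_ac)

lemma sum_eq_single_nonzero:
  "finite A \<Longrightarrow> k \<in> A \<Longrightarrow> (\<And>i. i \<in> A \<Longrightarrow> i \<noteq> k \<Longrightarrow> f i = 0) \<Longrightarrow>
   sum f A = f k"
  by (simp add: sum.remove sum.neutral)

lemma less_double_cases:
  assumes "(i::nat) < 2*r"
  obtains k where "k < r" "i = 2*k" | k where "k < r" "i = 2*k+1"
proof -
  have "i div 2 < r" using assms by presburger
  then show thesis
    using that by (cases "even i") (auto elim!: evenE oddE)
qed

lemma symp_stdvec_left_even: "k < r \<Longrightarrow> symp r (stdvec (2*k)) y = y (Suc (2*k))"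
  unfolding symp_def by (subst sum_eq_single_nonzero[of _ k]) (auto simp: stdvec_def)

lemma symp_stdvec_left_odd: "k < r \<Longrightarrow> symp r (stdvec (Suc (2*k))) y = - y (2*k)"
  unfolding symp_def by (subst sum_eq_single_nonzero[of _ k]) (auto simp: stdvec_def)

lemma symp_stdvec_right_even: "k < r \<Longrightarrow> symp r x (stdvec (2*k)) = - x (Suc (2*k))"
  unfolding symp_def by (subst sum_eq_single_nonzero[of _ k]) (auto simp: stdvec_def)

lemma symp_stdvec_right_odd: "k < r \<Longrightarrow> symp r x (stdvec (Suc (2*k))) = x (2*k)"
  unfolding symp_def by (subst sum_eq_single_nonzero[of _ k]) (auto simp: stdvec_def)

lemma symp_stdvec_hyperbolic_pair: "k < r \<Longrightarrow> symp r (stdvec (2*k)) (stdvec (Suc (2*k))) = 1"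
  by (simp add: symp_stdvec_left_even) (simp add: stdvec_def)

lemma symp_scale_left: "symp r (vscale c x) y = c * symp r x y"
  unfolding symp_def vscale_def by (simp add: sum_distrib_left algebra_simps)

lemma symp_scale_right: "symp r x (vscale c y) = c * symp r x y"
  unfolding symp_def vscale_def by (simp add: sum_distrib_left algebra_simps)

lemma stdvec_in_Vsp: "j < 2*r \<Longrightarrow> stdvec j \<in> Vsp r"
  by (simp add: Vsp_def stdvec_def)

lemma stdvec_neq_zero: "stdvec j \<noteq> (0 :: nat \<Rightarrow> 'a::field)"
  by (metis stdvec_def zero_neq_one zero_fun_def)

lemma stdvec_in_perp_vanish_from:
  assumes "2*k \<le> j" "j < 2*r"
  shows "stdvec j \<in> perp r (vanish_from (2*k))"
  using assms(2)
proof (cases rule: less_double_cases)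
  case (1 i)
  then show ?thesis using assms by (simp add: perp_def stdvec_in_Vsp symp_stdvec_left_even vanish_from_def)
next
  case (2 i)
  then show ?thesis using assms by (simp add: perp_def stdvec_in_Vsp symp_stdvec_left_odd vanish_from_def)
qed

lemma Vsp_subspace: "V.subspace (Vsp r :: (nat \<Rightarrow> 'a::field) set)"
  unfolding V.subspace_def Vsp_def by (auto simp: vscale_def)

lemma vanish_from_double: "vanish_from (2*r) = Vsp r"
  by (auto simp: vanish_from_def Vsp_def)

lemma vanish_from_subset_Vsp: "l \<le> 2*r \<Longrightarrow> vanish_from l \<subseteq> Vsp r"
  by (auto simp: vanish_from_def Vsp_def)

lemma Cham_eq_vanish_from: "Cham l = (vanish_from l :: (nat \<Rightarrow> 'a::field) set)"
proof
  have "V.subspace (vanish_from l :: (nat \<Rightarrow> 'a) set)"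
    unfolding V.subspace_def vanish_from_def by (auto simp: vscale_def)
  moreover have "stdvec ` {..<l} \<subseteq> (vanish_from l :: (nat \<Rightarrow> 'a) set)"
    by (auto simp: vanish_from_def stdvec_def)
  ultimately show "Cham l \<subseteq> (vanish_from l :: (nat \<Rightarrow> 'a) set)"
    unfolding Cham_def by (rule V.span_minimal[rotated])
next
  show "vanish_from l \<subseteq> (Cham l :: (nat \<Rightarrow> 'a) set)"
  proof
    fix v :: "nat \<Rightarrow> 'a" assume v: "v \<in> vanish_from l"
    have "v = (\<Sum>i<l. vscale (v i) (stdvec i))"
    proof
      fix j
      have "(\<Sum>i<l. vscale (v i) (stdvec i)) j = (\<Sum>i<l. v i * stdvec i j)"
        by (induction l) (auto simp: vscale_def)
      also have "\<dots> = v j"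
        using v by (cases "j < l")
          (subst sum_eq_single_nonzero[of _ j], auto simp: stdvec_def vanish_from_def)+
      finally show "v j = (\<Sum>i<l. vscale (v i) (stdvec i)) j" by simp
    qed
    also have "\<dots> \<in> Cham l"
      unfolding Cham_def by (intro V.span_sum V.span_scale V.span_base) auto
    finally show "v \<in> Cham l" .
  qed
qed

lemma mat_app_in_Vsp: "mat_app r M v \<in> Vsp r"
  by (simp add: mat_app_def Vsp_def)

lemma mat_app_stdvec:
  "j < 2*r \<Longrightarrow> mat_app r M (stdvec j) = (\<lambda>i. if i < 2*r then M i j else 0)"
  unfolding mat_app_def by (rule ext) (subst sum_eq_single_nonzero[of _ j], auto simp: stdvec_def)

lemma mat_app_add: "mat_app r M (x + y) = mat_app r M x + mat_app r M y"
  by (auto simp: mat_app_def sum.distrib algebra_simps)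

lemma matmul_eq_mat_app_column: "i < 2*r \<Longrightarrow> matmul r M N i j = mat_app r M (\<lambda>k. N k j) i"
  by (simp add: matmul_def mat_app_def)

lemma Sp_image_perp:
  assumes g: "g \<in> Sp r" and W: "W \<subseteq> Vsp r" "mat_app r g ` W = W"
  shows "mat_app r g ` perp r W \<subseteq> perp r W"
proof (rule image_subsetI)
  fix x assume x: "x \<in> perp r W"
  have "symp r (mat_app r g x) w = 0" if "w \<in> W" for w
  proof -
    obtain y where "y \<in> W" "w = mat_app r g y" using W(2) \<open>w \<in> W\<close> by blast
    then show ?thesis using g W(1) x by (auto simp: Sp_def perp_def)
  qed
  then show "mat_app r g x \<in> perp r W" by (simp add: perp_def mat_app_in_Vsp)
qed

lemma mat_app_blockmat: "mat_app r (blockmat r a b) v = (\<lambda>i. if i < 2*r then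
   (if even i then a (i div 2) * v i + b (i div 2) * v (i+1) else inverse (a (i div 2)) * v i) else 0)"
proof
  fix i
  show "mat_app r (blockmat r a b) v i = (if i < 2*r then
   (if even i then a (i div 2) * v i + b (i div 2) * v (i+1) else inverse (a (i div 2)) * v i) else 0)"
  proof (cases "i < 2*r")
    case True
    then show ?thesis
      by (cases rule: less_double_cases; unfold mat_app_def sum_lessThan_double;
          subst sum_eq_single_nonzero) (auto simp: blockmat_def)
  qed (simp add: mat_app_def)
qed

lemma blockmat_symp:
  assumes "\<forall>j<r. a j \<noteq> 0"
  shows "symp r (mat_app r (blockmat r a b) x) (mat_app r (blockmat r a b) y) = symp r x y"
  unfolding symp_def mat_app_blockmat using assms by (intro sum.cong) (auto simp: field_simps)

lemma blockmat_inverse_cancel: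
  assumes "\<forall>j<r. a j \<noteq> 0" "v \<in> Vsp r"
  shows "mat_app r (blockmat r (\<lambda>j. inverse (a j)) (\<lambda>j. - b j))
           (mat_app r (blockmat r a b) v) = v"
proof
  fix i
  show "mat_app r (blockmat r (\<lambda>j. inverse (a j)) (\<lambda>j. - b j))
          (mat_app r (blockmat r a b) v) i = v i"
  proof (cases "i < 2*r")
    case True
    then show ?thesis
      by (cases rule: less_double_cases) (use assms in \<open>auto simp: mat_app_blockmat field_simps\<close>)
  qed (use assms in \<open>simp add: mat_app_def Vsp_def\<close>)
qed

lemma blockmat_cancel_inverse:
  assumes "\<forall>j<r. a j \<noteq> 0" "v \<in> Vsp r"
  shows "mat_app r (blockmat r a b) (mat_app r (blockmat r (\<lambda>j. inverse (a j)) (\<lambda>j. - b j)) v) = v"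
  using blockmat_inverse_cancel[of r "\<lambda>j. inverse (a j)" v "\<lambda>j. - b j"] assms by simp

lemma blockmat_bij_betw:
  "\<forall>j<r. a j \<noteq> 0 \<Longrightarrow> bij_betw (mat_app r (blockmat r a b)) (Vsp r) (Vsp r)"
  by (rule bij_betw_byWitness
      [where f' = "mat_app r (blockmat r (\<lambda>j. inverse (a j)) (\<lambda>j. - b j))"])
    (auto simp: mat_app_in_Vsp blockmat_inverse_cancel blockmat_cancel_inverse)

lemma blockmat_vanish_from:
  "v \<in> vanish_from l \<Longrightarrow> mat_app r (blockmat r a b) v \<in> vanish_from l"
  by (auto simp: mat_app_blockmat vanish_from_def)

lemma blockmat_image_vanish_from:
  assumes "\<forall>j<r. a j \<noteq> 0" "l \<le> 2*r"
  shows "mat_app r (blockmat r a b) ` vanish_from l = vanish_from l"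
proof
  show "mat_app r (blockmat r a b) ` vanish_from l \<subseteq> vanish_from l"
    by (auto simp: blockmat_vanish_from)
  show "vanish_from l \<subseteq> mat_app r (blockmat r a b) ` vanish_from l"
  proof
    fix w :: "nat \<Rightarrow> 'a" assume w: "w \<in> vanish_from l"
    let ?w' = "mat_app r (blockmat r (\<lambda>j. inverse (a j)) (\<lambda>j. - b j)) w"
    have "w = mat_app r (blockmat r a b) ?w'"
      using w vanish_from_subset_Vsp[OF assms(2)] blockmat_cancel_inverse[OF assms(1)] by auto
    moreover have "?w' \<in> vanish_from l" using w by (rule blockmat_vanish_from)
    ultimately show "w \<in> mat_app r (blockmat r a b) ` vanish_from l" by blast
  qed
qed

lemma blockmat_in_Borel:
  assumes "(a, b) \<in> params r"
  shows "blockmat r a b \<in> Borel r"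
proof -
  have a: "\<forall>j<r. a j \<noteq> 0" using assms by (simp add: params_def)
  have "is_mat r (blockmat r a b)" by (simp add: is_mat_def blockmat_def)
  moreover have "\<forall>l\<in>{1..2*r-1}. mat_app r (blockmat r a b) ` Cham l = Cham l"
    by (metis blockmat_image_vanish_from[OF a] Cham_eq_vanish_from atLeastAtMost_iff diff_le_self le_trans)
  ultimately show ?thesis
    using a by (simp add: Borel_def Sp_def blockmat_symp blockmat_bij_betw)
qed

lemma blockmat_pmul:
  "blockmat r (\<lambda>j. a j * a' j) (\<lambda>j. a j * b' j + b j * inverse (a' j))
     = matmul r (blockmat r a b) (blockmat r a' b')"
proof (intro ext)
  fix i j
  show "blockmat r (\<lambda>j. a j * a' j) (\<lambda>j. a j * b' j + b j * inverse (a' j)) i j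
     = matmul r (blockmat r a b) (blockmat r a' b') i j"
  proof (cases "i < 2*r")
    case True
    then show ?thesis
      unfolding matmul_eq_mat_app_column[OF True] mat_app_blockmat
      by (cases rule: less_double_cases) (auto simp: blockmat_def algebra_simps elim!: oddE)
  qed (simp add: matmul_def blockmat_def)
qed

lemma blockmat_inj_on_params: "inj_on (\<lambda>(a,b). blockmat r a b) (params r)"
proof (rule inj_onI, clarify)
  fix a b a' b' :: "nat \<Rightarrow> 'a"
  assume p: "(a, b) \<in> params r" "(a', b') \<in> params r" and eq: "blockmat r a b = blockmat r a' b'"
  have "a j = a' j \<and> b j = b' j" for j
  proof (cases "j < r")
    case True
    have "blockmat r a b (2*j) (2*j) = blockmat r a' b' (2*j) (2*j)"
         "blockmat r a b (2*j) (2*j+1) = blockmat r a' b' (2*j) (2*j+1)" using eq by auto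
    then show ?thesis using True by (simp add: blockmat_def)
  qed (use p in \<open>simp add: params_def\<close>)
  then show "a = a' \<and> b = b'" by auto
qed

lemma blockmat_cong:
  "(\<And>k. k < r \<Longrightarrow> a k = a' k \<and> b k = b' k) \<Longrightarrow> blockmat r a b = blockmat r a' b'"
  by (auto simp: blockmat_def fun_eq_iff less_mult_imp_div_less)

lemma Borel_image_vanish_from:
  assumes g: "g \<in> Borel r" and l: "1 \<le> l" "l \<le> 2*r"
  shows "mat_app r g ` vanish_from l = vanish_from l"
proof (cases "l = 2*r")
  case True
  with g show ?thesis by (simp add: Borel_def Sp_def bij_betw_def vanish_from_double)
next
  case False
  with g l show ?thesis by (simp add: Borel_def Cham_eq_vanish_from)
qed

lemma Borel_entry_below_diagonal:
  assumes g: "g \<in> Borel r" and "i < 2*r" "j < i"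
  shows "g i j = 0"
proof -
  have "stdvec j \<in> vanish_from (Suc j)" by (simp add: vanish_from_def stdvec_def)
  then have "mat_app r g (stdvec j) \<in> vanish_from (Suc j)"
    using Borel_image_vanish_from[OF g, of "Suc j"] assms by auto
  then have "mat_app r g (stdvec j) i = 0" using assms by (simp add: vanish_from_def)
  then show ?thesis using assms by (simp add: mat_app_stdvec)
qed

lemma Borel_entry_right_of_block:
  assumes g: "g \<in> Borel r" and "i div 2 < j div 2" "j < 2*r"
  shows "g i j = 0"
proof -
  define k where "k = i div 2"
  let ?W = "vanish_from (2*k+2) :: (nat \<Rightarrow> 'a) set"
  let ?x = "mat_app r g (stdvec j)"
  have k: "k < r" "2*k+2 \<le> j" using assms unfolding k_def by auto
  have "?W \<subseteq> Vsp r" "mat_app r g ` ?W = ?W"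
    using k Borel_image_vanish_from[OF g, of "2*k+2"] vanish_from_subset_Vsp[of "2*k+2" r] by auto
  moreover have "stdvec j \<in> perp r ?W"
    using k assms(3) stdvec_in_perp_vanish_from[of "k+1" j r] by simp
  moreover have "g \<in> Sp r" using g by (simp add: Borel_def)
  ultimately have x: "?x \<in> perp r ?W" using Sp_image_perp by blast
  have "stdvec (2*k) \<in> ?W" "stdvec (Suc (2*k)) \<in> ?W" by (auto simp: vanish_from_def stdvec_def)
  then have "?x (2*k) = 0" "?x (Suc (2*k)) = 0"
    using x k symp_stdvec_right_odd[of k r ?x] symp_stdvec_right_even[of k r ?x] by (auto simp: perp_def)
  moreover have "i = 2*k \<or> i = Suc (2*k)" unfolding k_def by presburger
  ultimately show ?thesis using assms(3) k by (auto simp: mat_app_stdvec)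
qed

lemma Borel_diagonal_block_inverse:
  assumes g: "g \<in> Borel r" and k: "k < r"
  shows "g (2*k) (2*k) * g (Suc (2*k)) (Suc (2*k)) = 1"
proof -
  let ?g = "mat_app r g"
  have column: "?g (stdvec (2*k)) = vscale (g (2*k) (2*k)) (stdvec (2*k))"
  proof
    fix i
    have "g i (2*k) = 0" if "i < 2*r" "i \<noteq> 2*k"
      using that k Borel_entry_below_diagonal[OF g] Borel_entry_right_of_block[OF g]
      by (cases "i < 2*k") auto
    moreover have "?g (stdvec (2*k)) i = (if i < 2*r then g i (2*k) else 0)"
      using k by (simp add: mat_app_stdvec)
    ultimately show "?g (stdvec (2*k)) i = vscale (g (2*k) (2*k)) (stdvec (2*k)) i"
      using k by (auto simp: vscale_def stdvec_def)
  qed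
  have "1 = symp r (stdvec (2*k)) (stdvec (Suc (2*k)) :: nat \<Rightarrow> 'a)"
    using k by (simp add: symp_stdvec_hyperbolic_pair)
  also have "\<dots> = symp r (?g (stdvec (2*k))) (?g (stdvec (Suc (2*k))))"
    using g k by (simp add: Borel_def Sp_def stdvec_in_Vsp)
  also have "\<dots> = g (2*k) (2*k) * g (Suc (2*k)) (Suc (2*k))"
    using k unfolding column symp_scale_left by (simp add: symp_stdvec_left_even mat_app_stdvec)
  finally show ?thesis by simp
qed

lemma Borel_eq_blockmat:
  assumes g: "g \<in> Borel r"
  shows "g = blockmat r (\<lambda>k. g (2*k) (2*k)) (\<lambda>k. g (2*k) (Suc (2*k)))"
proof (intro ext)
  fix i j
  show "g i j = blockmat r (\<lambda>k. g (2*k) (2*k)) (\<lambda>k. g (2*k) (Suc (2*k))) i j"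
  proof (cases "i < 2*r \<and> j < 2*r")
    case False
    then show ?thesis using g by (auto simp: Borel_def Sp_def is_mat_def blockmat_def)
  next
    case True
    show ?thesis
    proof (cases "i div 2 = j div 2")
      case False
      then have "i div 2 < j div 2 \<or> j < i" by presburger
      then have "g i j = 0"
        using True by (auto intro: Borel_entry_right_of_block[OF g] Borel_entry_below_diagonal[OF g])
      with False show ?thesis by (simp add: blockmat_def)
    next
      case same_block: True
      define k where "k = i div 2"
      have "k < r" using True unfolding k_def by presburger
      then have "g (Suc (2*k)) (2*k) = 0" "inverse (g (2*k) (2*k)) = g (Suc (2*k)) (Suc (2*k))"
        using Borel_entry_below_diagonal[OF g] Borel_diagonal_block_inverse[OF g]
        by (auto intro: inverse_unique)
      moreover have "i = 2*k \<or> i = Suc (2*k)" "j = 2*k \<or> j = Suc (2*k)"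
        using same_block unfolding k_def by presburger+
      ultimately show ?thesis using \<open>k < r\<close> by (elim disjE) (simp_all add: blockmat_def)
    qed
  qed
qed

lemma Borel_subset_blockmat_image: "Borel r \<subseteq> (\<lambda>(a,b). blockmat r a b) ` params r"
proof
  fix g :: "nat \<Rightarrow> nat \<Rightarrow> 'a" assume g: "g \<in> Borel r"
  define a where "a = (\<lambda>k. if k < r then g (2*k) (2*k) else 1)"
  define b where "b = (\<lambda>k. if k < r then g (2*k) (Suc (2*k)) else 0)"
  have "\<forall>k<r. g (2*k) (2*k) \<noteq> 0"
    using Borel_diagonal_block_inverse[OF g] by (metis mult_zero_left zero_neq_one)
  then have "(a, b) \<in> params r" by (auto simp: params_def a_def b_def)
  moreover have "g = blockmat r a b"
    using Borel_eq_blockmat[OF g] by (metis (no_types, lifting) a_def b_def blockmat_cong)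
  ultimately show "g \<in> (\<lambda>(a,b). blockmat r a b) ` params r" by (auto intro: image_eqI)
qed

lemma mat_app_scalar: "v \<in> Vsp r \<Longrightarrow> mat_app r (\<lambda>i j. c * idmat r i j) v = vscale c v"
proof
  fix i assume v: "v \<in> Vsp r"
  show "mat_app r (\<lambda>i j. c * idmat r i j) v i = vscale c v i"
  proof (cases "i < 2*r")
    case True
    then show ?thesis unfolding mat_app_def
      by (subst sum_eq_single_nonzero[of _ i]) (auto simp: idmat_def vscale_def)
  qed (use v in \<open>simp add: mat_app_def Vsp_def vscale_def\<close>)
qed

lemma scalar_in_Sp:
  assumes "c * c = 1"
  shows "(\<lambda>i j. c * idmat r i j) \<in> Sp r"
proof -
  have Vsp: "vscale c v \<in> Vsp r" if "v \<in> Vsp r" for v :: "nat \<Rightarrow> 'a"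
    using that by (simp add: Vsp_def vscale_def)
  have "mat_app r (\<lambda>i j. c * idmat r i j) (mat_app r (\<lambda>i j. c * idmat r i j) v) = v"
    if "v \<in> Vsp r" for v
    using that Vsp[OF that] assms by (simp add: mat_app_scalar vscale_def mult.assoc[symmetric])
  then have "bij_betw (mat_app r (\<lambda>i j. c * idmat r i j)) (Vsp r) (Vsp r)"
    by (intro bij_betw_byWitness[where f' = "mat_app r (\<lambda>i j. c * idmat r i j)"])
      (auto simp: mat_app_in_Vsp)
  moreover have "is_mat r (\<lambda>i j. c * idmat r i j)" by (simp add: is_mat_def idmat_def)
  ultimately show ?thesis
    using assms by (simp add: Sp_def mat_app_scalar symp_scale_left symp_scale_right)
qed

lemma scalar_in_Sp_iff:
  assumes "1 \<le> r"
  shows "(\<lambda>i j. c * idmat r i j) \<in> Sp r \<longleftrightarrow> c * c = 1"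
proof
  assume "(\<lambda>i j. c * idmat r i j) \<in> Sp r"
  moreover have "stdvec 0 \<in> Vsp r" "stdvec 1 \<in> Vsp r" using assms by (auto intro: stdvec_in_Vsp)
  ultimately have "symp r (vscale c (stdvec 0)) (vscale c (stdvec 1))
      = symp r (stdvec 0) (stdvec 1 :: nat \<Rightarrow> 'a)"
    by (auto simp: Sp_def mat_app_scalar)
  moreover have "symp r (stdvec 0) (stdvec 1 :: nat \<Rightarrow> 'a) = 1"
    using symp_stdvec_hyperbolic_pair[of 0 r] assms by simp
  ultimately show "c * c = 1" by (simp add: symp_scale_left symp_scale_right)
qed (rule scalar_in_Sp)

lemma scalar_image_subspace:
  assumes "c \<noteq> 0" "V.subspace U" "U \<subseteq> Vsp r"
  shows "mat_app r (\<lambda>i j. c * idmat r i j) ` U = U"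
proof -
  have "vscale c ` U = U"
  proof
    show "vscale c ` U \<subseteq> U" using assms(2) by (auto intro: V.subspace_scale)
    show "U \<subseteq> vscale c ` U"
    proof
      fix u assume "u \<in> U"
      then have "vscale (inverse c) u \<in> U" using assms(2) by (rule V.subspace_scale[rotated])
      moreover have "u = vscale c (vscale (inverse c) u)"
        using assms(1) by (simp add: vscale_def fun_eq_iff field_simps)
      ultimately show "u \<in> vscale c ` U" by blast
    qed
  qed
  moreover have "mat_app r (\<lambda>i j. c * idmat r i j) ` U = vscale c ` U"
    using assms(3) by (auto simp: mat_app_scalar subset_iff intro!: image_cong)
  ultimately show ?thesis by simp
qed

lemma line_in_Gamma_obj:
  assumes "1 \<le> r" "v \<in> Vsp r" "v \<noteq> 0"
  shows "vspan {v} \<in> Gamma_obj r"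
proof -
  have "V.independent {v}" using assms(3) by (simp add: V.independent_insert V.independent_empty)
  then have "vdim (vspan {v}) = 1" by (simp add: V.dim_span_eq_card_independent V.dim_eq_card_independent)
  moreover have "vdim (Rad r (vspan {v})) \<le> card {v}"
    by (rule V.dim_le_card) (auto simp: Rad_def)
  moreover have "vspan {v} \<subseteq> Vsp r" using assms(2) Vsp_subspace by (intro V.span_minimal) auto
  ultimately show ?thesis using assms(1) by (simp add: Gamma_obj_def)
qed

lemma eigenvector_of_fixed_line:
  assumes "1 \<le> r" "\<forall>U\<in>Gamma_obj r. mat_app r g ` U = U" "v \<in> Vsp r" "v \<noteq> 0"
  shows "\<exists>c. mat_app r g v = vscale c v"
proof -
  have "mat_app r g ` vspan {v} = vspan {v}"
    using assms line_in_Gamma_obj by blast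
  then have "mat_app r g v \<in> vspan {v}" by (auto intro: V.span_base)
  then show ?thesis by (auto simp: V.span_singleton)
qed

lemma scalar_if_every_vector_eigen:
  assumes g: "is_mat r g"
    and eigen: "\<forall>v\<in>Vsp r. v \<noteq> 0 \<longrightarrow> (\<exists>c. mat_app r g v = vscale c v)"
  shows "g = (\<lambda>i j. g 0 0 * idmat r i j)"
proof -
  have column: "g i j = (if i = j then c else 0)"
    if "mat_app r g (stdvec j) = vscale c (stdvec j)" "i < 2*r" "j < 2*r" for i j c
    using that(2) fun_cong[OF that(1), of i] unfolding mat_app_stdvec[OF that(3)]
    by (simp add: vscale_def stdvec_def)
  have off_diagonal: "g i j = 0" if "i < 2*r" "j < 2*r" "i \<noteq> j" for i j
    using eigen column that stdvec_in_Vsp[OF that(2)] stdvec_neq_zero by metis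
  have diagonal: "g j j = g k k" if "j < 2*r" "k < 2*r" "j \<noteq> k" for j k
  proof -
    let ?v = "stdvec j + stdvec k :: nat \<Rightarrow> 'a"
    have "?v \<in> Vsp r" "?v j \<noteq> 0" using that by (auto simp: Vsp_def stdvec_def)
    then obtain c where c: "mat_app r g ?v = vscale c ?v" using eigen by fastforce
    have "mat_app r g ?v i = g i j + g i k" if "i < 2*r" for i
      using that \<open>j < 2*r\<close> \<open>k < 2*r\<close> by (simp add: mat_app_add mat_app_stdvec)
    then have "g j j = c" "g k k = c"
      using fun_cong[OF c, of j] fun_cong[OF c, of k] off_diagonal that
      by (auto simp: vscale_def stdvec_def)
    then show ?thesis by simp
  qed
  show ?thesis
  proof (intro ext)
    fix i j
    show "g i j = g 0 0 * idmat r i j"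
      using g off_diagonal[of i j] diagonal[of i 0]
      by (cases "i < 2*r \<and> j < 2*r") (auto simp: is_mat_def idmat_def)
  qed
qed

lemma Gamma_kernel_eq:
  assumes r: "1 \<le> r"
  shows "{g \<in> Sp r. \<forall>U\<in>Gamma_obj r. mat_app r g ` U = U}
         = {idmat r, (\<lambda>i j. - idmat r i j) :: nat \<Rightarrow> nat \<Rightarrow> 'a::field}"
  (is "?kernel = _")
proof (rule equalityI)
  show "?kernel \<subseteq> {idmat r, \<lambda>i j. - idmat r i j}"
  proof (rule subsetI)
    fix g assume "g \<in> ?kernel"
    then have g: "g \<in> Sp r" "\<forall>U\<in>Gamma_obj r. mat_app r g ` U = U" by simp_all
    have scalar: "g = (\<lambda>i j. g 0 0 * idmat r i j)"
      using g r by (intro scalar_if_every_vector_eigen eigenvector_of_fixed_line ballI impI)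
        (auto simp: Sp_def)
    then have "g 0 0 * g 0 0 = 1" using g(1) scalar_in_Sp_iff[OF r] by metis
    then have "g 0 0 = 1 \<or> g 0 0 = -1" by (simp add: square_eq_1_iff)
    then show "g \<in> {idmat r, \<lambda>i j. - idmat r i j}" by (subst scalar) auto
  qed
  have "(\<lambda>i j. c * idmat r i j) \<in> ?kernel" if "c * c = 1" for c
  proof -
    have "c \<noteq> 0" using that by (metis mult_zero_left zero_neq_one)
    with that show ?thesis by (simp add: scalar_in_Sp Gamma_obj_def scalar_image_subspace)
  qed
  from this[of 1] this[of "-1"] show "{idmat r, \<lambda>i j. - idmat r i j} \<subseteq> ?kernel"
    by simp
qed

theorem lemma5p7:
  fixes r :: nat
  assumes r: "1 \<le> r"
    and F: "infinite (UNIV :: 'a::field set) \<or> 3 \<le> card (UNIV :: 'a set)"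
  shows "Borel r = (\<lambda>(a,b). blockmat r a b) ` (params r :: ((nat \<Rightarrow> 'a) \<times> (nat \<Rightarrow> 'a)) set)
     \<and> bij_betw (\<lambda>(a,b). blockmat r a b) (params r :: ((nat \<Rightarrow> 'a) \<times> (nat \<Rightarrow> 'a)) set) (Borel r)
     \<and> (\<forall>p\<in>params r. \<forall>q\<in>(params r :: ((nat \<Rightarrow> 'a) \<times> (nat \<Rightarrow> 'a)) set).
          (\<lambda>(a,b). blockmat r a b) (pmul p q)
            = matmul r ((\<lambda>(a,b). blockmat r a b) p) ((\<lambda>(a,b). blockmat r a b) q))
     \<and> {g \<in> Sp r. \<forall>U\<in>Gamma_obj r. mat_app r g ` U = U}
         = {idmat r, (\<lambda>i j. - idmat r i j) :: nat \<Rightarrow> nat \<Rightarrow> 'a}"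
proof -
  let ?block = "\<lambda>(a,b). blockmat r a b :: nat \<Rightarrow> nat \<Rightarrow> 'a"
  have "?block ` params r \<subseteq> Borel r"
  proof (rule image_subsetI)
    fix p :: "(nat \<Rightarrow> 'a) \<times> (nat \<Rightarrow> 'a)"
    assume "p \<in> params r"
    then show "?block p \<in> Borel r" by (cases p) (simp add: blockmat_in_Borel)
  qed
  with Borel_subset_blockmat_image have image: "Borel r = ?block ` params r"
    by (rule equalityI)
  then have "bij_betw ?block (params r) (Borel r)"
    using blockmat_inj_on_params by (simp add: bij_betw_def)
  moreover have
    "\<forall>p\<in>params r. \<forall>q\<in>params r. ?block (pmul p q) = matmul r (?block p) (?block q)"
    by (auto simp: pmul_def blockmat_pmul)
  ultimately show ?thesis using image Gamma_kernel_eq[OF r] by (intro conjI)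
qed

end
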